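(* Let $d\ge1$, $\sigma>0$, and consider the balanced case $\varpi=\tfrac12$. Let $p:=\mathbb{P}(|Z|\le 1)+\tfrac12\mathbb{P}(|Z|>1)$ where $Z\sim\mathcal N(0,1)$ (so $p<1$). Then the population EM operator $M$ satisfies: (a) for every nonzero $\theta\in\mathbb{R}^d$, $$\frac{\|M(\theta)\|_2}{\|\theta\|_2}\le \gamma_{\mathrm{up}}(\theta):=1-p+\frac{p}{1+\frac{\|\theta\|_2^2}{2\sigma^2}}<1;$$ (b) for every nonzero $\theta\in\mathbb{R}^d$ with $\|\theta\|_2^2\le \frac{5\sigma^2}{8}$, $$\frac{\|M(\theta)\|_2}{\|\theta\|_2}\ge \gamma_{\mathrm{low}}(\theta):=\frac{1}{1+\frac{2\|\theta\|_2^2}{\sigma^2}}.$$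
   Context: Data distribution: $X\sim\mathcal N(0,\sigma^2 I_d)$. For the balanced fit $\tfrac12\mathcal N(\theta,\sigma^2I_d)+\tfrac12\mathcal N(-\theta,\sigma^2I_d)$, define $w_\theta(x)=\frac{\exp(-\|\theta-x\|_2^2/(2\sigma^2))}{\exp(-\|\theta-x\|_2^2/(2\sigma^2))+\exp(-\|\theta+x\|_2^2/(2\sigma^2))}=\frac{1}{1+e^{-2\theta^\top x/\sigma^2}}$, and the population EM operator $M(\theta)=\mathbb{E}[(2w_\theta(X)-1)X]=\mathbb{E}[X\tanh(\theta^\top X/\sigma^2)]$. *)

theory Defs
  imports "HOL-Probability.Probability"
begin

definition iso_gaussian :: "real \<Rightarrow> 'a::euclidean_space measure" where
  "iso_gaussian \<sigma> = density lborel
     (\<lambda>x. ennreal (\<Prod>b\<in>Basis. normal_density 0 \<sigma> (x \<bullet> b)))"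

definition EM_weight :: "real \<Rightarrow> 'a::euclidean_space \<Rightarrow> 'a \<Rightarrow> real" where
  "EM_weight \<sigma> \<theta> x =
     exp (- (norm (\<theta> - x))\<^sup>2 / (2 * \<sigma>\<^sup>2)) /
     (exp (- (norm (\<theta> - x))\<^sup>2 / (2 * \<sigma>\<^sup>2)) + exp (- (norm (\<theta> + x))\<^sup>2 / (2 * \<sigma>\<^sup>2)))"

definition EM_pop :: "real \<Rightarrow> 'a::euclidean_space \<Rightarrow> 'a" where
  "EM_pop \<sigma> \<theta> = integral\<^sup>L (iso_gaussian \<sigma>) (\<lambda>x. (2 * EM_weight \<sigma> \<theta> x - 1) *\<^sub>R x)"

definition p_const :: real where
  "p_const = measure (density lborel std_normal_density) {x. \<bar>x\<bar> \<le> 1}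
     + 1/2 * measure (density lborel std_normal_density) {x. \<bar>x\<bar> > 1}"

end

theory Submission
  imports Defs
begin

text \<open>
  Writing \<open>X = \<sigma> Z\<close> and \<open>a = \<parallel>\<theta>\<parallel> / \<sigma>\<close>, the EM operator is
  \<open>M(\<theta>) = E[tanh (\<theta> \<bullet> X / \<sigma>\<^sup>2) X]\<close>.  It is the gradient of the convex potential
  \<open>\<Phi>(\<theta>) = E[\<sigma>\<^sup>2 log cosh (\<theta> \<bullet> X / \<sigma>\<^sup>2)]\<close>, which depends on \<open>\<theta>\<close> only through
  \<open>\<parallel>\<theta>\<parallel>\<close> and is Lipschitz in it; moving \<open>\<theta>\<close> orthogonally changes \<open>\<parallel>\<theta>\<parallel>\<close> only to second
  order, so \<open>M(\<theta>)\<close> is parallel to \<open>\<theta>\<close>.  Since \<open>\<theta> \<bullet> X\<close> is \<open>N(0, \<sigma>\<^sup>2\<parallel>\<theta>\<parallel>\<^sup>2)\<close>,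
  \<open>\<parallel>M(\<theta>)\<parallel> / \<parallel>\<theta>\<parallel> = E[Z tanh (a Z)] / a\<close> for a standard Gaussian \<open>Z\<close>.

  The lower bound follows from \<open>tanh y \<ge> y e^{-y\<^sup>2/2}\<close>, which makes the ratio at least
  \<open>(1 + a\<^sup>2)^{-3/2}\<close>.  For the upper bound, \<open>tanh y\<close> is bounded by a mixture of its quintic
  Taylor polynomial and \<open>1\<close>, with the Gaussian weight \<open>e^{-b z\<^sup>2}(1 + b z\<^sup>2) \<in> [0,1]\<close>, so that
  the bound integrates in closed form through moments of \<open>N(0, s\<^sup>2)\<close>, \<open>b = (s\<^sup>{-2} - 1)/2\<close>.
  Choosing \<open>s\<close> piecewise in \<open>a\<close> and using \<open>p \<le> 0.8414\<close> reduces the claim to finitely many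
  polynomial inequalities on intervals, verified by Taylor expansion at the left end point.
\<close>

section \<open>Elementary inequalities\<close>

lemma tanh_le_self: fixes x :: real assumes "0 \<le> x" shows "tanh x \<le> x"
proof -
  have "(\<lambda>t. t - tanh t) 0 \<le> (\<lambda>t. t - tanh t) x"
  proof (rule DERIV_nonneg_imp_nondecreasing[OF assms])
    fix t :: real
    show "\<exists>y. ((\<lambda>t. t - tanh t) has_real_derivative y) (at t) \<and> 0 \<le> y"
      by (rule exI[of _ "1 - (1 - tanh t ^ 2)"]) (auto intro!: derivative_eq_intros)
  qed
  then show ?thesis by simp
qed

lemma tanh_ge_cubic: fixes x :: real assumes "0 \<le> x" shows "x - x^3/3 \<le> tanh x"
proof -
  have "(\<lambda>t. tanh t - t + t^3/3) 0 \<le> (\<lambda>t. tanh t - t + t^3/3) x"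
  proof (rule DERIV_nonneg_imp_nondecreasing[OF assms])
    fix t :: real assume t: "0 \<le> t"
    have "tanh t ^ 2 \<le> t ^ 2" using tanh_le_self[OF t] t by (intro power_mono) auto
    then show "\<exists>y. ((\<lambda>t. tanh t - t + t^3/3) has_real_derivative y) (at t) \<and> 0 \<le> y"
      by (intro exI[of _ "(1 - tanh t ^ 2) - 1 + 3 * t^2 / 3"]) (auto intro!: derivative_eq_intros)
  qed
  then show ?thesis by simp
qed

lemma tanh_le_quintic: fixes x :: real assumes "0 \<le> x" shows "tanh x \<le> x - x^3/3 + 2*x^5/15"
proof -
  have "(\<lambda>t. t - t^3/3 + 2*t^5/15 - tanh t) 0 \<le> (\<lambda>t. t - t^3/3 + 2*t^5/15 - tanh t) x"
  proof (rule DERIV_nonneg_imp_nondecreasing[OF assms])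
    fix t :: real assume t: "0 \<le> t"
    have "t^2 - 2*t^4/3 \<le> tanh t ^ 2"
    proof (cases "t^2 \<le> 3")
      case True
      then have "0 \<le> t - t^3/3"
        using mult_left_mono[OF True t] by (simp add: power2_eq_square power3_eq_cube)
      then have "(t - t^3/3)^2 \<le> tanh t ^ 2" using tanh_ge_cubic[OF t] by (intro power_mono) auto
      moreover have "(t - t^3/3)^2 = t^2 - 2*t^4/3 + (t^3)^2/9"
        by (simp add: power2_eq_square power3_eq_cube power4_eq_xxxx algebra_simps)
      ultimately show ?thesis using zero_le_power2[of "t^3"] by linarith
    next
      case False
      then have "3 * t^2 \<le> t^2 * t^2" by (intro mult_right_mono) auto
      moreover have "t^4 = t^2 * t^2" by algebra
      ultimately have "t^2 - 2*t^4/3 \<le> 0" using zero_le_power2[of t] by linarith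
      then show ?thesis using zero_le_power2[of "tanh t"] by linarith
    qed
    then show "\<exists>y. ((\<lambda>t. t - t^3/3 + 2*t^5/15 - tanh t) has_real_derivative y) (at t) \<and> 0 \<le> y"
      by (intro exI[of _ "1 - 3*t^2/3 + 2*(5*t^4)/15 - (1 - tanh t ^ 2)"])
         (auto intro!: derivative_eq_intros)
  qed
  then show ?thesis by simp
qed

lemma sinh_ge_self: fixes x :: real assumes "0 \<le> x" shows "x \<le> sinh x"
proof -
  have "(\<lambda>t. sinh t - t) 0 \<le> (\<lambda>t. sinh t - t) x"
  proof (rule DERIV_nonneg_imp_nondecreasing[OF assms])
    fix t :: real
    show "\<exists>y. ((\<lambda>t. sinh t - t) has_real_derivative y) (at t) \<and> 0 \<le> y"
      by (rule exI[of _ "cosh t - 1"]) (auto intro!: derivative_eq_intros simp: cosh_real_ge_1)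
  qed
  then show ?thesis by simp
qed

lemma cosh_le_exp_square_half: fixes x :: real shows "cosh x \<le> exp (x^2/2)"
proof -
  have "(\<lambda>t. t^2/2 - ln (cosh t)) 0 \<le> (\<lambda>t. t^2/2 - ln (cosh t)) \<bar>x\<bar>"
  proof (rule DERIV_nonneg_imp_nondecreasing[OF abs_ge_zero])
    fix t :: real assume t: "0 \<le> t"
    have "sinh t / cosh t \<le> t" using tanh_le_self[OF t] by (simp add: tanh_def)
    then show "\<exists>y. ((\<lambda>t. t^2/2 - ln (cosh t)) has_real_derivative y) (at t) \<and> 0 \<le> y"
      by (intro exI[of _ "2*t/2 - sinh t / cosh t"]) (auto intro!: derivative_eq_intros)
  qed
  then have "ln (cosh x) \<le> x^2/2" by simp
  then show ?thesis by (metis cosh_real_pos exp_le_cancel_iff exp_ln)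
qed

lemma tanh_ge_mult_exp: fixes x :: real assumes "0 \<le> x" shows "x * exp (-(x^2)/2) \<le> tanh x"
proof -
  have "x * exp (-(x^2)/2) * cosh x \<le> x * exp (-(x^2)/2) * exp (x^2/2)"
    using cosh_le_exp_square_half[of x] assms by (intro mult_left_mono) auto
  also have "\<dots> = x" by (simp add: exp_minus field_simps)
  also have "\<dots> \<le> sinh x" by (rule sinh_ge_self[OF assms])
  finally show ?thesis by (simp add: tanh_def field_simps)
qed

lemma exp_mult_le_cosh_add_sinh: fixes d \<tau> :: real assumes "\<bar>\<tau>\<bar> \<le> 1"
  shows "exp (\<tau> * d) \<le> cosh d + \<tau> * sinh d"
proof -
  let ?t = "(1 + \<tau>) / 2"
  have "exp ((1 - ?t) *\<^sub>R (-d) + ?t *\<^sub>R d) \<le> (1 - ?t) * exp (-d) + ?t * exp d"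
    by (rule convex_onD[OF exp_convex]) (use assms in auto)
  moreover have "(1 - ?t) *\<^sub>R (-d) + ?t *\<^sub>R d = \<tau> * d" by (simp add: field_simps)
  moreover have "(1 - ?t) * exp (-d) + ?t * exp d = cosh d + \<tau> * sinh d"
    by (simp add: cosh_def sinh_def field_simps)
  ultimately show ?thesis by simp
qed

lemma ln_cosh_tangent_le: fixes x y :: real
  shows "ln (cosh x) + tanh x * (y - x) \<le> ln (cosh y)"
proof -
  have "\<bar>tanh x\<bar> \<le> 1" using tanh_real_bounds[of x] by auto
  then have "cosh x * exp (tanh x * (y - x)) \<le> cosh x * (cosh (y - x) + tanh x * sinh (y - x))"
    by (intro mult_left_mono exp_mult_le_cosh_add_sinh) auto
  also have "\<dots> = cosh y" using cosh_add[of x "y - x"] by (simp add: tanh_def field_simps)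
  finally have "ln (cosh x * exp (tanh x * (y - x))) \<le> ln (cosh y)" by (subst ln_le_cancel_iff) auto
  then show ?thesis by (simp add: ln_mult)
qed

lemma abs_ln_cosh_diff_le: fixes x y :: real shows "\<bar>ln (cosh y) - ln (cosh x)\<bar> \<le> \<bar>y - x\<bar>"
proof -
  have "\<bar>tanh x * (y - x)\<bar> \<le> \<bar>y - x\<bar>" "\<bar>tanh y * (x - y)\<bar> \<le> \<bar>y - x\<bar>"
    using tanh_real_bounds[of x] tanh_real_bounds[of y]
    by (auto simp: abs_mult abs_minus_commute intro!: mult_left_le_one_le)
  then show ?thesis using ln_cosh_tangent_le[of x y] ln_cosh_tangent_le[of y x] by linarith
qed

lemma exp_minus_le_taylor2: fixes y :: real assumes y: "0 \<le> y" shows "exp (-y) \<le> 1 - y + y ^ 2 / 2"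
proof -
  have "(\<lambda>t. 1 - t + t ^ 2 / 2 - exp (-t)) 0 \<le> (\<lambda>t. 1 - t + t ^ 2 / 2 - exp (-t)) y"
  proof (rule DERIV_nonneg_imp_nondecreasing[OF y])
    fix t :: real
    have "1 - t \<le> exp (-t)" using exp_ge_add_one_self[of "-t"] by simp
    then show "\<exists>d. ((\<lambda>t. 1 - t + t ^ 2 / 2 - exp (-t)) has_real_derivative d) (at t) \<and> 0 \<le> d"
      by (intro exI[of _ "- 1 + 2 * t / 2 + exp (-t)"]) (auto intro!: derivative_eq_intros)
  qed
  then show ?thesis by simp
qed

lemma exp_minus_ge_taylor3: fixes y :: real assumes y: "0 \<le> y"
  shows "1 - y + y ^ 2 / 2 - y ^ 3 / 6 \<le> exp (-y)"
proof -
  have "(\<lambda>t. exp (-t) - (1 - t + t ^ 2 / 2 - t ^ 3 / 6)) 0 \<le> (\<lambda>t. exp (-t) - (1 - t + t ^ 2 / 2 - t ^ 3 / 6)) y"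
  proof (rule DERIV_nonneg_imp_nondecreasing[OF y])
    fix t :: real assume t: "0 \<le> t"
    then show "\<exists>d. ((\<lambda>t. exp (-t) - (1 - t + t ^ 2 / 2 - t ^ 3 / 6)) has_real_derivative d) (at t) \<and> 0 \<le> d"
      using exp_minus_le_taylor2[OF t]
      by (intro exI[of _ "- exp (-t) - (- 1 + 2 * t / 2 - 3 * t ^ 2 / 6)"]) (auto intro!: derivative_eq_intros)
  qed
  then show ?thesis by simp
qed

lemma exp_minus_le_taylor4: fixes y :: real assumes y: "0 \<le> y"
  shows "exp (-y) \<le> 1 - y + y ^ 2 / 2 - y ^ 3 / 6 + y ^ 4 / 24"
proof -
  have "(\<lambda>t. 1 - t + t ^ 2 / 2 - t ^ 3 / 6 + t ^ 4 / 24 - exp (-t)) 0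
      \<le> (\<lambda>t. 1 - t + t ^ 2 / 2 - t ^ 3 / 6 + t ^ 4 / 24 - exp (-t)) y"
  proof (rule DERIV_nonneg_imp_nondecreasing[OF y])
    fix t :: real assume t: "0 \<le> t"
    then show "\<exists>d. ((\<lambda>t. 1 - t + t ^ 2 / 2 - t ^ 3 / 6 + t ^ 4 / 24 - exp (-t)) has_real_derivative d) (at t) \<and> 0 \<le> d"
      using exp_minus_ge_taylor3[OF t]
      by (intro exI[of _ "- 1 + 2 * t / 2 - 3 * t ^ 2 / 6 + 4 * t ^ 3 / 24 + exp (-t)"])
         (auto intro!: derivative_eq_intros)
  qed
  then show ?thesis by simp
qed

lemma nonneg_polynomial_by_coefficient_bounds:
  fixes c :: "nat \<Rightarrow> real" and h \<delta> :: real
  assumes h: "0 \<le> h" "h \<le> \<delta>" and c: "0 \<le> c 0 + (\<Sum>k\<in>{1..n}. min 0 (c k) * \<delta> ^ k)"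
  shows "0 \<le> (\<Sum>k\<le>n. c k * h ^ k)"
proof -
  have "min 0 (c k) * \<delta> ^ k \<le> c k * h ^ k" for k
  proof (cases "c k \<le> 0")
    case True
    then have "c k * \<delta> ^ k \<le> c k * h ^ k" using h by (intro mult_left_mono_neg power_mono) auto
    then show ?thesis using True by simp
  qed (use h in auto)
  then have "c 0 + (\<Sum>k\<in>{1..n}. min 0 (c k) * \<delta> ^ k) \<le> c 0 + (\<Sum>k\<in>{1..n}. c k * h ^ k)"
    by (intro add_left_mono sum_mono)
  also have "\<dots> = (\<Sum>k\<le>n. c k * h ^ k)"
    by (simp add: atMost_atLeast0 sum.atLeast_Suc_atMost)
  finally show ?thesis using c by linarith
qed

lemma eq_0_if_le_quadratic:
  fixes m K :: real assumes K: "0 \<le> K" and le: "\<And>t. t \<noteq> 0 \<Longrightarrow> t * m \<le> K * t\<^sup>2"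
  shows "m = 0"
proof (rule ccontr)
  assume m: "m \<noteq> 0"
  define t where "t = m / (2 * (K + 1))"
  have "0 < m\<^sup>2 / (2 * (K + 1))" using m K by simp
  moreover have "t * m = m\<^sup>2 / (2 * (K + 1))" "K * t\<^sup>2 = m\<^sup>2 / (2 * (K + 1)) * (K / (2 * (K + 1)))"
    unfolding t_def using K by (simp_all add: power2_eq_square)
  moreover have "K / (2 * (K + 1)) < 1" using K by simp
  moreover have "t \<noteq> 0" using m K by (simp add: t_def)
  ultimately show False using le[of t] by (smt (verit) mult_less_cancel_left2)
qed

lemma norm_add_orthogonal_bounds:
  fixes \<theta> v :: "'a::real_inner" assumes th: "\<theta> \<noteq> 0" and ov: "orthogonal \<theta> v"
  shows "norm \<theta> \<le> norm (\<theta> + v)" "norm (\<theta> + v) \<le> norm \<theta> + (norm v)\<^sup>2 / norm \<theta>"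
proof -
  have n: "0 < norm \<theta>" using th by simp
  have eq: "(norm (\<theta> + v))\<^sup>2 = (norm \<theta>)\<^sup>2 + (norm v)\<^sup>2" by (rule norm_add_Pythagorean[OF ov])
  then have "(norm \<theta>)\<^sup>2 \<le> (norm (\<theta> + v))\<^sup>2" by simp
  then show "norm \<theta> \<le> norm (\<theta> + v)" by (rule power2_le_imp_le) simp
  have "(norm \<theta> + (norm v)\<^sup>2 / norm \<theta>)\<^sup>2 = (norm \<theta>)\<^sup>2 + 2 * (norm v)\<^sup>2 + ((norm v)\<^sup>2 / norm \<theta>)\<^sup>2"
    using n by (simp add: power2_sum)
  then have "(norm (\<theta> + v))\<^sup>2 \<le> (norm \<theta> + (norm v)\<^sup>2 / norm \<theta>)\<^sup>2"
    unfolding eq using zero_le_power2[of "(norm v)\<^sup>2 / norm \<theta>"] zero_le_power2[of "norm v"] by linarith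
  then show "norm (\<theta> + v) \<le> norm \<theta> + (norm v)\<^sup>2 / norm \<theta>"
    by (rule power2_le_imp_le) (use n in simp)
qed

lemma sqrt_two_div_pi_le: "sqrt (2 / pi) \<le> 7979 / 10000"
proof -
  have "2 / pi \<le> (7979 / 10000)\<^sup>2" using pi_approx(1) by (simp add: field_simps)
  then have "sqrt (2 / pi) \<le> sqrt ((7979 / 10000)\<^sup>2)" by (rule real_sqrt_le_mono)
  then show ?thesis by simp
qed

section \<open>The one-dimensional ratio\<close>

lemma std_normal_density_mult_exp:
  fixes s z :: real assumes s: "0 < s"
  shows "std_normal_density z * exp (- ((1 / s\<^sup>2 - 1) / 2 * z\<^sup>2)) = s * normal_density 0 s z"
proof -
  have "exp (- z\<^sup>2 / 2) * exp (- ((1 / s\<^sup>2 - 1) / 2 * z\<^sup>2)) = exp (- z\<^sup>2 / (2 * s\<^sup>2))"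
    unfolding mult_exp_exp using s by (simp add: field_simps)
  moreover have "sqrt (2 * pi * s\<^sup>2) = sqrt (2 * pi) * s" using s by (simp add: real_sqrt_mult)
  ultimately show ?thesis using s by (simp add: std_normal_density_def normal_density_def field_simps)
qed

lemma normal_density_moments:
  fixes s :: real assumes s: "0 < s"
  shows "has_bochner_integral lborel (\<lambda>z. normal_density 0 s z * z ^ 2) (s ^ 2)"
    and "has_bochner_integral lborel (\<lambda>z. normal_density 0 s z * z ^ 4) (3 * s ^ 4)"
    and "has_bochner_integral lborel (\<lambda>z. normal_density 0 s z * z ^ 6) (15 * s ^ 6)"
    and "has_bochner_integral lborel (\<lambda>z. normal_density 0 s z * z ^ 8) (105 * s ^ 8)"
    and "has_bochner_integral lborel (\<lambda>z. normal_density 0 s z * \<bar>z\<bar>) (s * sqrt (2 / pi))"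
    and "has_bochner_integral lborel (\<lambda>z. normal_density 0 s z * \<bar>z\<bar> ^ 3) (2 * s ^ 3 * sqrt (2 / pi))"
  using normal_moment_even[OF s, of 0 1] normal_moment_even[OF s, of 0 2]
    normal_moment_even[OF s, of 0 3] normal_moment_even[OF s, of 0 4]
    normal_moment_abs_odd[OF s, of 0 0] normal_moment_abs_odd[OF s, of 0 1] s
  by (simp_all add: field_simps eval_nat_numeral fact_numeral)

definition em_ratio :: "real \<Rightarrow> real" where
  "em_ratio a = (\<integral>z. std_normal_density z * (z * tanh (a * z) / a) \<partial>lborel)"

lemma mult_tanh_mult_abs: fixes a z :: real shows "z * tanh (a * z) = \<bar>z\<bar> * tanh (a * \<bar>z\<bar>)"
  by (cases "z \<ge> 0") auto

lemma abs_mult_tanh_le: fixes a z :: real shows "\<bar>z * tanh (a * z)\<bar> \<le> \<bar>z\<bar>"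
proof -
  have "\<bar>tanh (a * z)\<bar> \<le> 1" using tanh_real_bounds[of "a * z"] by (auto simp: abs_le_iff)
  then show ?thesis unfolding abs_mult by (intro mult_right_le_one_le) auto
qed

lemma integrable_em_ratio:
  fixes a :: real assumes a: "0 < a"
  shows "integrable lborel (\<lambda>z. std_normal_density z * (z * tanh (a * z) / a))"
proof (rule Bochner_Integration.integrable_bound)
  show "integrable lborel (\<lambda>z. std_normal_density z * \<bar>z\<bar> / a)"
    using integrable_std_normal_moment_abs[of 1] by simp
  have "continuous_on UNIV (\<lambda>z. std_normal_density z * (z * tanh (a * z) / a))"
    using a by (auto intro!: continuous_intros simp: std_normal_density_def)
  then show "(\<lambda>z. std_normal_density z * (z * tanh (a * z) / a)) \<in> borel_measurable lborel"
    by (simp add: borel_measurable_continuous_onI)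
  show "AE z in lborel. norm (std_normal_density z * (z * tanh (a * z) / a)) \<le> norm (std_normal_density z * \<bar>z\<bar> / a)"
    using a abs_mult_tanh_le[of z a for z]
    by (intro AE_I2) (auto simp: abs_mult intro!: mult_left_mono divide_right_mono)
qed

lemma em_ratio_nonneg: fixes a :: real assumes a: "0 < a" shows "0 \<le> em_ratio a"
proof -
  have "0 \<le> std_normal_density z * (z * tanh (a * z) / a)" for z
    using a by (simp add: mult_tanh_mult_abs[of z a])
  then show ?thesis unfolding em_ratio_def by (intro integral_nonneg_AE AE_I2)
qed

text \<open>Since \<open>tanh y \<ge> y e^{-y\<^sup>2/2}\<close>, the ratio dominates a second moment of the Gaussian of
  variance \<open>1/(1 + a\<^sup>2)\<close>.\<close>
lemma em_ratio_ge_moment: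
  fixes a :: real assumes a: "0 < a"
  shows "1 / sqrt (1 + a\<^sup>2) ^ 3 \<le> em_ratio a"
proof -
  define s where "s = 1 / sqrt (1 + a\<^sup>2)"
  have s0: "0 < s" unfolding s_def by (simp add: add_pos_nonneg)
  have b: "(1 / s\<^sup>2 - 1) / 2 = a\<^sup>2 / 2" unfolding s_def by (simp add: power_divide add_nonneg_nonneg)
  have hb: "has_bochner_integral lborel (\<lambda>z. std_normal_density z * (z\<^sup>2 * exp (- (a\<^sup>2 / 2 * z\<^sup>2)))) (s * s\<^sup>2)"
  proof -
    have "has_bochner_integral lborel (\<lambda>z. s * (normal_density 0 s z * z\<^sup>2)) (s * s\<^sup>2)"
      by (intro has_bochner_integral_mult_right normal_density_moments(1)[OF s0])
    moreover have "s * (normal_density 0 s z * z\<^sup>2) = std_normal_density z * (z\<^sup>2 * exp (- (a\<^sup>2 / 2 * z\<^sup>2)))" for z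
      using std_normal_density_mult_exp[OF s0, of z] unfolding b by (simp add: algebra_simps)
    ultimately show ?thesis by simp
  qed
  have "z\<^sup>2 * exp (- (a\<^sup>2 / 2 * z\<^sup>2)) \<le> z * tanh (a * z) / a" for z
  proof -
    have "a * (z\<^sup>2 * exp (- (a\<^sup>2 / 2 * z\<^sup>2))) = \<bar>z\<bar> * (a * \<bar>z\<bar> * exp (- (a * \<bar>z\<bar>)\<^sup>2 / 2))"
      by (simp add: power_mult_distrib power2_abs) (simp add: power2_eq_square)
    also have "\<dots> \<le> \<bar>z\<bar> * tanh (a * \<bar>z\<bar>)"
      using a by (intro mult_left_mono tanh_ge_mult_exp) auto
    also have "\<dots> = z * tanh (a * z)" by (rule mult_tanh_mult_abs[symmetric])
    finally show ?thesis using a by (simp add: pos_le_divide_eq mult.commute)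
  qed
  then have "(\<integral>z. std_normal_density z * (z\<^sup>2 * exp (- (a\<^sup>2 / 2 * z\<^sup>2))) \<partial>lborel) \<le> em_ratio a"
    unfolding em_ratio_def using integrable.intros[OF hb] integrable_em_ratio[OF a]
    by (intro integral_mono mult_left_mono) auto
  then have "s * s\<^sup>2 \<le> em_ratio a" using has_bochner_integral_integral_eq[OF hb] by simp
  then show ?thesis unfolding s_def by (simp add: power_divide power2_eq_square power3_eq_cube ac_simps)
qed

lemma em_ratio_lower:
  fixes a :: real assumes a: "0 < a" and a2: "a\<^sup>2 \<le> 5/8"
  shows "1 / (1 + 2 * a\<^sup>2) \<le> em_ratio a"
proof -
  have a4: "a ^ 4 \<le> 5/8 * a\<^sup>2"
    using mult_right_mono[OF a2, of "a\<^sup>2"] by (simp add: power_numeral_reduce algebra_simps)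
  moreover have "a ^ 6 \<le> 5/8 * a ^ 4"
    using mult_right_mono[OF a4, of "a\<^sup>2"] by (simp add: power_numeral_reduce algebra_simps)
  moreover have "(1 + 2 * a\<^sup>2)\<^sup>2 - (1 + a\<^sup>2) ^ 3 = a\<^sup>2 + a ^ 4 - a ^ 6" by algebra
  moreover have "0 \<le> a\<^sup>2" "0 \<le> a ^ 4" by simp_all
  ultimately have "(1 + a\<^sup>2) ^ 3 \<le> (1 + 2 * a\<^sup>2)\<^sup>2" by linarith
  moreover have "(sqrt (1 + a\<^sup>2) ^ 3)\<^sup>2 = ((sqrt (1 + a\<^sup>2))\<^sup>2) ^ 3"
    by (metis power_mult mult.commute)
  ultimately have "(sqrt (1 + a\<^sup>2) ^ 3)\<^sup>2 \<le> (1 + 2 * a\<^sup>2)\<^sup>2" by simp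
  then have "sqrt (1 + a\<^sup>2) ^ 3 \<le> 1 + 2 * a\<^sup>2" by (rule power2_le_imp_le) simp
  then have "1 / (1 + 2 * a\<^sup>2) \<le> 1 / sqrt (1 + a\<^sup>2) ^ 3"
    by (intro divide_left_mono mult_pos_pos) (auto intro: add_pos_nonneg)
  also have "\<dots> \<le> em_ratio a" by (rule em_ratio_ge_moment[OF a])
  finally show ?thesis .
qed

definition mixing_weight :: "real \<Rightarrow> real \<Rightarrow> real" where
  "mixing_weight b z = exp (- (b * z\<^sup>2)) * (1 + b * z\<^sup>2)"

definition tanh_majorant :: "real \<Rightarrow> real \<Rightarrow> real \<Rightarrow> real" where
  "tanh_majorant a b z = mixing_weight b z * (z\<^sup>2 - a\<^sup>2 * z ^ 4 / 3 + 2 * a ^ 4 * z ^ 6 / 15)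
     + (1 - mixing_weight b z) * \<bar>z\<bar> / a"

lemma mixing_weight_bounds:
  fixes b z :: real assumes "0 \<le> b"
  shows "0 \<le> mixing_weight b z" "mixing_weight b z \<le> 1"
proof -
  show "0 \<le> mixing_weight b z" using assms by (simp add: mixing_weight_def)
  have "1 + b * z\<^sup>2 \<le> exp (b * z\<^sup>2)" by (rule exp_ge_add_one_self)
  then show "mixing_weight b z \<le> 1" by (simp add: mixing_weight_def exp_minus field_simps)
qed

lemma tanh_ratio_le_majorant:
  fixes a b z :: real assumes a: "0 < a" and b: "0 \<le> b"
  shows "z * tanh (a * z) / a \<le> tanh_majorant a b z"
proof -
  let ?y = "a * \<bar>z\<bar>" and ?W = "mixing_weight b z"
  have "tanh ?y = ?W * tanh ?y + (1 - ?W) * tanh ?y" by (simp add: algebra_simps)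
  also have "\<dots> \<le> ?W * (?y - ?y ^ 3 / 3 + 2 * ?y ^ 5 / 15) + (1 - ?W) * 1"
    using mixing_weight_bounds[OF b, of z] a tanh_real_lt_1[of ?y]
    by (intro add_mono mult_left_mono tanh_le_quintic) auto
  finally have "\<bar>z\<bar> / a * tanh ?y \<le> \<bar>z\<bar> / a * (?W * (?y - ?y ^ 3 / 3 + 2 * ?y ^ 5 / 15) + (1 - ?W))"
    using a by (intro mult_left_mono) auto
  also have "\<dots> = ?W * (\<bar>z\<bar> / a * (?y - ?y ^ 3 / 3 + 2 * ?y ^ 5 / 15)) + (1 - ?W) * (\<bar>z\<bar> / a)"
    by (simp only: ring_distribs mult_1_right ac_simps)
  also have "\<bar>z\<bar> / a * (?y - ?y ^ 3 / 3 + 2 * ?y ^ 5 / 15)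
      = (a * (\<bar>z\<bar>\<^sup>2 - a\<^sup>2 * \<bar>z\<bar> ^ 4 / 3 + 2 * a ^ 4 * \<bar>z\<bar> ^ 6 / 15)) / a"
    by (simp only: times_divide_eq_left) (rule arg_cong[where f = "\<lambda>t. t / a"], algebra)
  finally have "\<bar>z\<bar> / a * tanh ?y \<le> tanh_majorant a b z"
    using a by (simp add: tanh_majorant_def power_even_abs)
  then show ?thesis by (simp add: mult_tanh_mult_abs[of z a])
qed

lemma std_normal_density_mult_tanh_majorant:
  fixes a s z :: real assumes s: "0 < s"
  defines "b \<equiv> (1 / s\<^sup>2 - 1) / 2"
  shows "std_normal_density z * tanh_majorant a b z = std_normal_density z * \<bar>z\<bar> * (1 / a)
    + s * (normal_density 0 s z * z\<^sup>2 + (b - a\<^sup>2 / 3) * (normal_density 0 s z * z ^ 4)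
       + (2 * a ^ 4 / 15 - a\<^sup>2 * b / 3) * (normal_density 0 s z * z ^ 6)
       + (2 * a ^ 4 * b / 15) * (normal_density 0 s z * z ^ 8)
       - (normal_density 0 s z * \<bar>z\<bar> + b * (normal_density 0 s z * \<bar>z\<bar> ^ 3)) * (1 / a))"
proof -
  have "std_normal_density z * exp (- (b * z\<^sup>2)) = s * normal_density 0 s z"
    using std_normal_density_mult_exp[OF s, of z] by (simp add: b_def)
  moreover have "\<bar>z\<bar> ^ 3 = \<bar>z\<bar> * z\<^sup>2" by (simp add: power2_eq_square power3_eq_cube)
  ultimately show ?thesis unfolding tanh_majorant_def mixing_weight_def by algebra
qed

lemma has_bochner_integral_tanh_majorant:
  fixes a s :: real assumes a: "a \<noteq> 0" and s: "0 < s"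
  defines "b \<equiv> (1 / s\<^sup>2 - 1) / 2"
  shows "has_bochner_integral lborel (\<lambda>z. std_normal_density z * tanh_majorant a b z)
    (s ^ 3 * (5 - 3 * s\<^sup>2) / 2 - s ^ 5 * (7 - 5 * s\<^sup>2) / 2 * a\<^sup>2 + s ^ 7 * (9 - 7 * s\<^sup>2) * a ^ 4
      + sqrt (2 / pi) * (1 - s\<^sup>2)\<^sup>2 / a)"
proof -
  let ?c = "sqrt (2 / pi)"
  have "has_bochner_integral lborel (\<lambda>z. std_normal_density z * \<bar>z\<bar> * (1 / a)
    + s * (normal_density 0 s z * z\<^sup>2 + (b - a\<^sup>2 / 3) * (normal_density 0 s z * z ^ 4)
       + (2 * a ^ 4 / 15 - a\<^sup>2 * b / 3) * (normal_density 0 s z * z ^ 6)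
       + (2 * a ^ 4 * b / 15) * (normal_density 0 s z * z ^ 8)
       - (normal_density 0 s z * \<bar>z\<bar> + b * (normal_density 0 s z * \<bar>z\<bar> ^ 3)) * (1 / a)))
    (1 * ?c * (1 / a) + s * (s\<^sup>2 + (b - a\<^sup>2 / 3) * (3 * s ^ 4) + (2 * a ^ 4 / 15 - a\<^sup>2 * b / 3) * (15 * s ^ 6)
       + (2 * a ^ 4 * b / 15) * (105 * s ^ 8) - (s * ?c + b * (2 * s ^ 3 * ?c)) * (1 / a)))"
    by (intro has_bochner_integral_add has_bochner_integral_diff has_bochner_integral_mult_left
        has_bochner_integral_mult_right normal_density_moments s zero_less_one)
  moreover have "1 * ?c * (1 / a) + s * (s\<^sup>2 + (b - a\<^sup>2 / 3) * (3 * s ^ 4)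
       + (2 * a ^ 4 / 15 - a\<^sup>2 * b / 3) * (15 * s ^ 6) + (2 * a ^ 4 * b / 15) * (105 * s ^ 8)
       - (s * ?c + b * (2 * s ^ 3 * ?c)) * (1 / a))
    = s ^ 3 * (5 - 3 * s\<^sup>2) / 2 - s ^ 5 * (7 - 5 * s\<^sup>2) / 2 * a\<^sup>2 + s ^ 7 * (9 - 7 * s\<^sup>2) * a ^ 4
      + ?c * (1 - s\<^sup>2)\<^sup>2 / a"
    using a s unfolding b_def by (simp add: field_simps power2_eq_square power3_eq_cube eval_nat_numeral)
  ultimately show ?thesis
    unfolding b_def std_normal_density_mult_tanh_majorant[OF s] by simp
qed

text \<open>For \<open>s = 0\<close> this is the trivial bound \<open>\<bar>tanh\<bar> \<le> 1\<close>; for \<open>0 < s \<le> 1\<close> it integrates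
  \<open>tanh_majorant\<close>, whose mixing weight turns the standard Gaussian into \<open>N(0, s\<^sup>2)\<close>.\<close>
lemma em_ratio_le_moment_bound:
  fixes a s :: real assumes a: "0 < a" and s: "0 \<le> s" "s \<le> 1"
  shows "em_ratio a \<le> s ^ 3 * (5 - 3 * s\<^sup>2) / 2 - s ^ 5 * (7 - 5 * s\<^sup>2) / 2 * a\<^sup>2
    + s ^ 7 * (9 - 7 * s\<^sup>2) * a ^ 4 + sqrt (2 / pi) * (1 - s\<^sup>2)\<^sup>2 / a"
proof (cases "s = 0")
  case True
  have hb: "has_bochner_integral lborel (\<lambda>z. std_normal_density z * \<bar>z\<bar> / a) (sqrt (2 / pi) / a)"
    using has_bochner_integral_divide_zero[OF normal_density_moments(5)[OF zero_less_one]] by simp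
  have "em_ratio a \<le> (\<integral>z. std_normal_density z * \<bar>z\<bar> / a \<partial>lborel)"
    unfolding em_ratio_def using integrable_em_ratio[OF a] integrable.intros[OF hb]
  proof (rule integral_mono)
    show "std_normal_density z * (z * tanh (a * z) / a) \<le> std_normal_density z * \<bar>z\<bar> / a" for z
      using a abs_mult_tanh_le[of z a] by (auto intro!: mult_left_mono divide_right_mono)
  qed
  then show ?thesis using True a has_bochner_integral_integral_eq[OF hb] by simp
next
  case False
  define b where "b = (1 / s\<^sup>2 - 1) / 2"
  have b: "0 \<le> b" using s False by (simp add: b_def power_le_one field_simps)
  note hb = has_bochner_integral_tanh_majorant[OF _ _, of a s, folded b_def]
  have "em_ratio a \<le> (\<integral>z. std_normal_density z * tanh_majorant a b z \<partial>lborel)"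
    unfolding em_ratio_def using integrable_em_ratio[OF a] integrable.intros[OF hb] a s False
    by (intro integral_mono mult_left_mono tanh_ratio_le_majorant b) auto
  then show ?thesis using has_bochner_integral_integral_eq[OF hb] a s False by simp
qed

text \<open>The bound of \<open>em_ratio_le_moment_bound\<close>, with \<open>sqrt (2 / pi) \<le> 7979/10000\<close> and
  \<open>p \<le> 4207/5000\<close>, compared with the target \<open>1 - p a\<^sup>2 / (2 + a\<^sup>2)\<close> after multiplying by \<open>a (2 + a\<^sup>2)\<close>.\<close>
definition upper_gap :: "real \<Rightarrow> real \<Rightarrow> real" where
  "upper_gap s a = a * (2 + (1 - 4207/5000) * a\<^sup>2)
     - (s ^ 3 * (5 - 3 * s\<^sup>2) / 2 - s ^ 5 * (7 - 5 * s\<^sup>2) / 2 * a\<^sup>2 + s ^ 7 * (9 - 7 * s\<^sup>2) * a ^ 4)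
       * a * (2 + a\<^sup>2)
     - 7979/10000 * (1 - s\<^sup>2)\<^sup>2 * (2 + a\<^sup>2)"

lemma em_ratio_le_of_upper_gap:
  fixes a s :: real assumes a: "0 < a" and s: "0 \<le> s" "s \<le> 1" and gap: "0 \<le> upper_gap s a"
  shows "em_ratio a \<le> 1 - 4207/5000 * a\<^sup>2 / (2 + a\<^sup>2)"
proof -
  let ?A = "s ^ 3 * (5 - 3 * s\<^sup>2) / 2 - s ^ 5 * (7 - 5 * s\<^sup>2) / 2 * a\<^sup>2 + s ^ 7 * (9 - 7 * s\<^sup>2) * a ^ 4"
  have d: "0 < a * (2 + a\<^sup>2)" using a by (simp add: add_pos_nonneg)
  have "em_ratio a \<le> ?A + sqrt (2 / pi) * (1 - s\<^sup>2)\<^sup>2 / a"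
    by (rule em_ratio_le_moment_bound[OF a s])
  also have "\<dots> \<le> ?A + 7979/10000 * (1 - s\<^sup>2)\<^sup>2 / a"
    using a sqrt_two_div_pi_le by (intro add_left_mono divide_right_mono mult_right_mono) auto
  also have "\<dots> = (?A * a * (2 + a\<^sup>2) + 7979/10000 * (1 - s\<^sup>2)\<^sup>2 * (2 + a\<^sup>2)) / (a * (2 + a\<^sup>2))"
    using a d by (simp add: field_simps)
  also have "\<dots> \<le> a * (2 + (1 - 4207/5000) * a\<^sup>2) / (a * (2 + a\<^sup>2))"
    using gap d by (intro divide_right_mono) (auto simp: upper_gap_def)
  also have "\<dots> = (2 + (1 - 4207/5000) * a\<^sup>2) / (2 + a\<^sup>2)"
    using a by simp
  also have "\<dots> = 1 - 4207/5000 * a\<^sup>2 / (2 + a\<^sup>2)"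
    using add_pos_nonneg[OF zero_less_two zero_le_power2[of a]] by (simp add: field_simps)
  finally show ?thesis .
qed

text \<open>The certificates \<open>c\<close> used below are the exact Taylor coefficients of \<open>upper_gap s\<close> at the
  left end point \<open>l\<close> of an interval.\<close>
lemma upper_gap_nonneg_by_certificate:
  fixes s l u a :: real and c :: "real list"
  assumes "\<And>x. upper_gap s x = (\<Sum>k\<le>7. c ! k * (x - l) ^ k)"
    and "0 \<le> c ! 0 + (\<Sum>k\<in>{1..7}. min 0 (c ! k) * (u - l) ^ k)"
    and "l \<le> a" "a \<le> u"
  shows "0 \<le> upper_gap s a"
  using nonneg_polynomial_by_coefficient_bounds[of "a - l" "u - l" "\<lambda>k. c ! k" 7] assms by simp

lemma upper_gap_one_nonneg:
  fixes a :: real assumes a: "0 < a" "a \<le> 11/20"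
  shows "0 \<le> upper_gap 1 a"
proof -
  have "a\<^sup>2 \<le> 121/400" using power_mono[OF a(2), of 2] a by (simp add: power2_eq_square)
  moreover have "a ^ 4 \<le> (121/400)\<^sup>2"
    using power_mono[OF calculation, of 2] by (simp add: power_numeral_reduce)
  moreover have "(121/400)\<^sup>2 = (14641/160000 :: real)" by (simp add: power2_eq_square)
  ultimately have "0 \<le> a ^ 3 * ((2 - 4207/5000) - 3 * a\<^sup>2 - 2 * a ^ 4)"
    using a by (intro mult_nonneg_nonneg) auto
  also have "a ^ 3 * ((2 - 4207/5000) - 3 * a\<^sup>2 - 2 * a ^ 4) = upper_gap 1 a"
    unfolding upper_gap_def by simp algebra
  finally show ?thesis .
qed

lemma upper_gap_zero_nonneg:
  fixes a :: real assumes a: "8/5 \<le> a"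
  shows "0 \<le> upper_gap 0 a"
proof -
  define h where "h = a - 8/5"
  have h: "0 \<le> h" using a by (simp add: h_def)
  have "0 \<le> 10387/15625 - 1831/50000 * h + 793/5000 * h\<^sup>2"
  proof (cases "h \<le> 1")
    case False
    then have "h \<le> h\<^sup>2" by (simp add: power2_eq_square)
    then show ?thesis using h by linarith
  qed (use h in \<open>simp add: add_nonneg_nonneg\<close>)
  then have "0 \<le> 132001/625000 + h * (10387/15625 - 1831/50000 * h + 793/5000 * h\<^sup>2)"
    using h by simp
  also have "\<dots> = upper_gap 0 a"
    unfolding upper_gap_def h_def by simp algebra
  finally show ?thesis .
qed

lemma upper_gap_three_quarters_nonneg:
  fixes a :: real assumes a: "11/20 \<le> a" "a \<le> 17/25"
  shows "0 \<le> upper_gap (3/4) a"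
proof -
  consider "a \<le> 93/160" | "93/160 \<le> a" "a \<le> 103/160" | "103/160 \<le> a" by linarith
  then show ?thesis
  proof cases
    case 1
    show ?thesis
      by (rule upper_gap_nonneg_by_certificate[OF _ _ a(1) 1, where c =
          "[642364723247/335544320000000, 5439078262843/16777216000000,
           - (258448937993/167772160000), - (180189940801/41943040000),
           - (2636280999/419430400), - (539748927/104857600),
           - (13640319/5242880), - (177147/262144)]"])
        (simp_all add: upper_gap_def eval_nat_numeral, algebra)
  next
    case 2
    show ?thesis
      by (rule upper_gap_nonneg_by_certificate[OF _ _ 2, where c =
          "[7321053306787745129/703687441776640000000,
           943540187425493867/4398046511104000000,
           - (10894338086111887/5497558138880000),
           - (881948248972321/171798691840000), - (1530834723153/214748364800),
           - (37910610063/6710886400), - (115322697/41943040), - (177147/262144)]"])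
        (simp_all add: upper_gap_def eval_nat_numeral, algebra)
  next
    case 3
    show ?thesis
      by (rule upper_gap_nonneg_by_certificate[OF _ _ 3 a(2), where c =
          "[10346887997683469299/703687441776640000000,
           - (443060754490801133/4398046511104000000),
           - (17183883716613613/5497558138880000),
           - (1228394259055921/171798691840000), - (1945777661883/214748364800),
           - (45201980583/6710886400), - (127722987/41943040), - (177147/262144)]"])
        (simp_all add: upper_gap_def eval_nat_numeral, algebra)
  qed
qed

lemma upper_gap_seven_tenths_nonneg:
  fixes a :: real assumes a: "17/25 \<le> a" "a \<le> 3/4"
  shows "0 \<le> upper_gap (7/10) a"
  by (rule upper_gap_nonneg_by_certificate[OF _ _ a, where c =
      "[103530159895338227/6103515625000000000,
       14282344515278167/244140625000000000,
       - (25800443622957897/9765625000000000),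
       - (436640858834297/78125000000000), - (21460708095841/3125000000000),
       - (3118349216619/625000000000), - (54586900669/25000000000),
       - (458713451/1000000000)]"])
    (simp_all add: upper_gap_def eval_nat_numeral, algebra)

lemma upper_gap_three_fifths_nonneg:
  fixes a :: real assumes a: "3/4 \<le> a" "a \<le> 19/20"
  shows "0 \<le> upper_gap (3/5) a"
proof -
  consider "a \<le> 13/16" | "13/16 \<le> a" "a \<le> 15/16" | "15/16 \<le> a" by linarith
  then show ?thesis
  proof cases
    case 1
    show ?thesis
      by (rule upper_gap_nonneg_by_certificate[OF _ _ a(1) 1, where c =
          "[384713999/16000000000, 1674035699/4000000000,
           - (1594339061/1000000000), - (138637421/50000000), - (8201979/2500000),
           - (35990487/15625000), - (3720087/3906250), - (354294/1953125)]"])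
        (simp_all add: upper_gap_def eval_nat_numeral, algebra)
  next
    case 2
    show ?thesis
      by (rule upper_gap_nonneg_by_certificate[OF _ _ 2, where c =
          "[11336231213689/262144000000000, 3003813702859/16384000000000,
           - (2249695296731/1024000000000), - (47202169901/12800000000),
           - (649272429/160000000), - (668849967/250000000),
           - (16120377/15625000), - (354294/1953125)]"])
        (simp_all add: upper_gap_def eval_nat_numeral, algebra)
  next
    case 3
    show ?thesis
      by (rule upper_gap_nonneg_by_certificate[OF _ _ 3 a(2), where c =
          "[1234964817391/52428800000000, - (376127923717/655360000000),
           - (822563956357/204800000000), - (3162382373/512000000),
           - (957485367/160000000), - (877174839/250000000), - (3720087/3125000),
           - (354294/1953125)]"])
        (simp_all add: upper_gap_def eval_nat_numeral, algebra)
  qed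
qed

lemma upper_gap_half_nonneg:
  fixes a :: real assumes a: "19/20 \<le> a" "a \<le> 23/20"
  shows "0 \<le> upper_gap (1/2) a"
  by (rule upper_gap_nonneg_by_certificate[OF _ _ a, where c =
      "[63717597137/655360000000, 13953456333/32768000000,
       - (2233227747/1638400000), - (143651303/81920000), - (1483577/819200),
       - (224649/204800), - (3857/10240), - (29/512)]"])
    (simp_all add: upper_gap_def eval_nat_numeral, algebra)

lemma upper_gap_two_fifths_nonneg:
  fixes a :: real assumes a: "23/20 \<le> a" "a \<le> 8/5"
  shows "0 \<le> upper_gap (2/5) a"
proof -
  consider "a \<le> 7/5" | "7/5 \<le> a" by linarith
  then show ?thesis
  proof cases
    case 1
    show ?thesis
      by (rule upper_gap_nonneg_by_certificate[OF _ _ a(1) 1, where c =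
          "[15009807948689/78125000000000, 2210364501151/3906250000000,
           - (146689075089/195312500000), - (1239350531/1953125000),
           - (31893686/48828125), - (17218584/48828125), - (1014944/9765625),
           - (25216/1953125)]"])
        (simp_all add: upper_gap_def eval_nat_numeral, algebra)
  next
    case 2
    show ?thesis
      by (rule upper_gap_nonneg_by_certificate[OF _ _ 2 a(2), where c =
          "[668485188917/2441406250000, 2808745973/122070312500,
           - (149741804457/97656250000), - (3012444071/1953125000),
           - (58519216/48828125), - (25658064/48828125), - (1235584/9765625),
           - (25216/1953125)]"])
        (simp_all add: upper_gap_def eval_nat_numeral, algebra)
  qed
qed

lemma em_ratio_upper:
  fixes a :: real assumes a: "0 < a"
  shows "em_ratio a \<le> 1 - 4207/5000 * a\<^sup>2 / (2 + a\<^sup>2)"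
proof -
  consider "a \<le> 11/20" | "11/20 \<le> a" "a \<le> 17/25" | "17/25 \<le> a" "a \<le> 3/4"
    | "3/4 \<le> a" "a \<le> 19/20" | "19/20 \<le> a" "a \<le> 23/20" | "23/20 \<le> a" "a \<le> 8/5" | "8/5 \<le> a"
    by linarith
  then show ?thesis
  proof cases
    case 1
    then show ?thesis by (intro em_ratio_le_of_upper_gap[OF a _ _ upper_gap_one_nonneg]) (use a in auto)
  next
    case 2
    then show ?thesis by (intro em_ratio_le_of_upper_gap[OF a _ _ upper_gap_three_quarters_nonneg]) auto
  next
    case 3
    then show ?thesis by (intro em_ratio_le_of_upper_gap[OF a _ _ upper_gap_seven_tenths_nonneg]) auto
  next
    case 4
    then show ?thesis by (intro em_ratio_le_of_upper_gap[OF a _ _ upper_gap_three_fifths_nonneg]) auto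
  next
    case 5
    then show ?thesis by (intro em_ratio_le_of_upper_gap[OF a _ _ upper_gap_half_nonneg]) auto
  next
    case 6
    then show ?thesis by (intro em_ratio_le_of_upper_gap[OF a _ _ upper_gap_two_fifths_nonneg]) auto
  next
    case 7
    then show ?thesis by (intro em_ratio_le_of_upper_gap[OF a _ _ upper_gap_zero_nonneg]) auto
  qed
qed

section \<open>The constant \<open>p\<close>\<close>

lemma std_normal_prob_abs_le_one: "measure (density lborel std_normal_density) {x. \<bar>x\<bar> \<le> 1} \<le> 6828/10000"
proof -
  define q :: "real \<Rightarrow> real" where "q x = 1 - x ^ 2 / 2 + x ^ 4 / 8 - x ^ 6 / 48 + x ^ 8 / 384" for x
  define Q :: "real \<Rightarrow> real" where "Q x = x - x ^ 3 / 6 + x ^ 5 / 40 - x ^ 7 / 336 + x ^ 9 / 3456" for x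
  let ?k = "1 / sqrt (2 * pi)"
  have q: "std_normal_density x \<le> ?k * q x" for x
  proof -
    have "exp (- (x\<^sup>2 / 2)) \<le> q x"
      using exp_minus_le_taylor4[of "x\<^sup>2 / 2"]
      by (simp add: q_def power_divide power_mult[symmetric] algebra_simps)
    then show ?thesis unfolding std_normal_density_def by (intro mult_left_mono) auto
  qed
  have "{x::real. \<bar>x\<bar> \<le> 1} = {-1..1}" by auto
  then have "measure (density lborel std_normal_density) {x. \<bar>x\<bar> \<le> 1}
      = (\<integral>x. indicator {-1..1} x \<partial>density lborel std_normal_density)"
    by simp
  also have "\<dots> = (\<integral>x. std_normal_density x * indicator {-1..1} x \<partial>lborel)"
    by (subst integral_density) auto
  also have "\<dots> \<le> (\<integral>x. indicator {-1..1} x *\<^sub>R (?k * q x) \<partial>lborel)"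
  proof (rule integral_mono)
    show "integrable lborel (\<lambda>x. std_normal_density x * indicator {-1..1} x)"
      by (rule Bochner_Integration.integrable_bound[OF integrable_normal_density[where \<mu> = 0 and \<sigma> = 1]])
         (auto split: split_indicator)
    have "continuous_on {-1..1} (\<lambda>x. ?k * q x)" by (auto intro!: continuous_intros simp: q_def)
    then show "integrable lborel (\<lambda>x. indicator {-1..1} x *\<^sub>R (?k * q x))"
      using borel_integrable_atLeastAtMost' unfolding set_integrable_def by blast
    show "std_normal_density x * indicator {-1..1} x \<le> indicator {-1..1} x *\<^sub>R (?k * q x)" for x
      using q[of x] by (auto split: split_indicator)
  qed
  also have "\<dots> = ?k * Q 1 - ?k * Q (-1)"
  proof (rule integral_FTC_atLeastAtMost)
    show "((\<lambda>x. ?k * Q x) has_vector_derivative ?k * q x) (at x within {-1..1})" for x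
      unfolding has_real_derivative_iff_has_vector_derivative[symmetric] Q_def q_def
      by (auto intro!: derivative_eq_intros simp: field_simps)
  qed (auto intro!: continuous_intros simp: q_def)
  also have "\<dots> = ?k * (2 * Q 1)" by (simp add: Q_def algebra_simps)
  also have "\<dots> \<le> (1 / 2.506628) * (2 * Q 1)"
  proof (rule mult_right_mono)
    have "2.506628\<^sup>2 \<le> 2 * pi" using pi_approx(1) by (simp add: power2_eq_square)
    then have "2.506628 \<le> sqrt (2 * pi)" by (rule real_le_rsqrt)
    then show "?k \<le> 1 / 2.506628" by (intro divide_left_mono) auto
  qed (simp add: Q_def)
  also have "\<dots> \<le> 6828/10000" by (simp add: Q_def)
  finally show ?thesis .
qed

lemma p_const_bounds: "1/2 \<le> p_const" "p_const \<le> 4207/5000"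
proof -
  interpret N: prob_space "density lborel std_normal_density"
    by (rule prob_space_normal_density) simp
  have "{x::real. \<bar>x\<bar> > 1} = space (density lborel std_normal_density) - {x. \<bar>x\<bar> \<le> 1}" by auto
  then have "p_const = (1 + measure (density lborel std_normal_density) {x. \<bar>x\<bar> \<le> 1}) / 2"
    unfolding p_const_def using N.prob_compl[of "{x. \<bar>x\<bar> \<le> 1}"] by (simp add: field_simps)
  then show "1/2 \<le> p_const" "p_const \<le> 4207/5000"
    using std_normal_prob_abs_le_one by simp_all
qed

section \<open>Linear functionals of the isotropic Gaussian\<close>

abbreviation centered_normal :: "real \<Rightarrow> real measure" where
  "centered_normal \<sigma> \<equiv> density lborel (\<lambda>y. ennreal (normal_density 0 \<sigma> y))"

lemma centered_normal_std_normal: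
  fixes s :: real and F :: "real \<Rightarrow> real" assumes s: "0 < s" and F[measurable]: "F \<in> borel_measurable borel"
  shows "integral\<^sup>L (centered_normal s) F = (\<integral>z. std_normal_density z * F (s * z) \<partial>lborel)"
    and "integrable (centered_normal s) F \<longleftrightarrow> integrable lborel (\<lambda>z. std_normal_density z * F (s * z))"
proof -
  have e: "normal_density 0 s (0 + s * z) * F (0 + s * z) = (1 / s) * (std_normal_density z * F (s * z))" for z
    using s by (simp add: normal_density_def real_sqrt_mult power_mult_distrib field_simps)
  have "integral\<^sup>L (centered_normal s) F = (\<integral>y. normal_density 0 s y * F y \<partial>lborel)"
    by (subst integral_density) auto
  also have "\<dots> = \<bar>s\<bar> * (\<integral>z. normal_density 0 s (0 + s * z) * F (0 + s * z) \<partial>lborel)"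
    using s by (subst lborel_integral_real_affine[where c = s and t = 0]) auto
  finally show "integral\<^sup>L (centered_normal s) F = (\<integral>z. std_normal_density z * F (s * z) \<partial>lborel)"
    using s unfolding e by simp
  have "integrable (centered_normal s) F \<longleftrightarrow> integrable lborel (\<lambda>y. normal_density 0 s y * F y)"
    by (subst integrable_density) auto
  also have "\<dots> \<longleftrightarrow> integrable lborel (\<lambda>z. normal_density 0 s (0 + s * z) * F (0 + s * z))"
    using s by (subst lborel_integrable_real_affine_iff[where c = s and t = 0, symmetric]) auto
  also have "\<dots> \<longleftrightarrow> integrable lborel (\<lambda>z. std_normal_density z * F (s * z))"
    unfolding e using s by (subst integrable_mult_left_iff) simp_all
  finally show "integrable (centered_normal s) F \<longleftrightarrow> integrable lborel (\<lambda>z. std_normal_density z * F (s * z))" .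
qed

lemma density_PiM_normal_density:
  fixes \<sigma> :: real assumes s: "0 < \<sigma>"
  shows "density (\<Pi>\<^sub>M b\<in>(Basis::'a::euclidean_space set). lborel)
           (\<lambda>f. ennreal (\<Prod>b\<in>Basis. normal_density 0 \<sigma> (f b))) = (\<Pi>\<^sub>M b\<in>(Basis::'a set). centered_normal \<sigma>)"
proof -
  interpret N: prob_space "centered_normal \<sigma>" by (rule prob_space_normal_density) (simp add: s)
  interpret PN: product_sigma_finite "\<lambda>_::'a. centered_normal \<sigma>" by standard
  interpret PL: product_sigma_finite "\<lambda>_::'a. lborel :: real measure" by standard
  show ?thesis
  proof (rule PN.PiM_eqI)
    fix A :: "'a \<Rightarrow> real set" assume "\<And>i. i \<in> Basis \<Longrightarrow> A i \<in> sets (centered_normal \<sigma>)"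
    then have A: "\<And>i. i \<in> Basis \<Longrightarrow> A i \<in> sets borel" by simp
    have "emeasure (density (\<Pi>\<^sub>M b\<in>Basis. lborel) (\<lambda>f. ennreal (\<Prod>b\<in>Basis. normal_density 0 \<sigma> (f b)))) (Pi\<^sub>E Basis A)
       = (\<integral>\<^sup>+ f. (\<Prod>b\<in>Basis. ennreal (normal_density 0 \<sigma> (f b)) * indicator (A b) (f b)) \<partial>(\<Pi>\<^sub>M b\<in>(Basis::'a set). lborel))"
      using A by (subst emeasure_density)
        (auto intro!: sets_PiM_I_finite nn_integral_cong
          simp: space_PiM PiE_def Pi_iff indicator_def prod.distrib prod_ennreal)
    also have "\<dots> = (\<Prod>b\<in>Basis. \<integral>\<^sup>+ y. ennreal (normal_density 0 \<sigma> y) * indicator (A b) y \<partial>lborel)"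
      using A by (intro PL.product_nn_integral_prod) auto
    also have "\<dots> = (\<Prod>b\<in>Basis. emeasure (centered_normal \<sigma>) (A b))"
      using A by (intro prod.cong) (simp_all add: emeasure_density)
    finally show "emeasure (density (\<Pi>\<^sub>M b\<in>Basis. lborel) (\<lambda>f. ennreal (\<Prod>b\<in>Basis. normal_density 0 \<sigma> (f b)))) (Pi\<^sub>E Basis A)
       = (\<Prod>b\<in>Basis. emeasure (centered_normal \<sigma>) (A b))" .
  qed (simp_all cong: sets_PiM_cong)
qed

lemma sets_iso_gaussian[simp, measurable_cong]: "sets (iso_gaussian \<sigma> :: 'a::euclidean_space measure) = sets borel"
  by (simp add: iso_gaussian_def)

lemma iso_gaussian_eq_distr_PiM:
  fixes \<sigma> :: real assumes s: "0 < \<sigma>"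
  shows "(iso_gaussian \<sigma> :: 'a::euclidean_space measure) =
    distr (\<Pi>\<^sub>M b\<in>(Basis::'a set). centered_normal \<sigma>) borel (\<lambda>f. \<Sum>b\<in>Basis. f b *\<^sub>R b)"
proof -
  let ?g = "\<lambda>x::'a. ennreal (\<Prod>b\<in>Basis. normal_density 0 \<sigma> (x \<bullet> b))"
  let ?S = "\<lambda>f. \<Sum>b\<in>(Basis::'a set). f b *\<^sub>R b"
  have "(iso_gaussian \<sigma> :: 'a measure) = density (distr (\<Pi>\<^sub>M b\<in>(Basis::'a set). lborel) borel ?S) ?g"
    unfolding iso_gaussian_def by (subst lborel_eq) rule
  also have "\<dots> = distr (density (\<Pi>\<^sub>M b\<in>(Basis::'a set). lborel) (\<lambda>f. ?g (?S f))) borel ?S"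
    by (rule density_distr) auto
  also have "density (\<Pi>\<^sub>M b\<in>(Basis::'a set). lborel) (\<lambda>f. ?g (?S f))
      = density (\<Pi>\<^sub>M b\<in>(Basis::'a set). lborel) (\<lambda>f. ennreal (\<Prod>b\<in>Basis. normal_density 0 \<sigma> (f b)))"
    by (rule density_cong)
      (auto simp: inner_sum_left inner_Basis if_distrib cong: if_cong intro!: AE_I2 prod.cong)
  finally show ?thesis unfolding density_PiM_normal_density[OF s] .
qed

context fixes \<sigma> :: real assumes s: "0 < \<sigma>"
begin

lemma prob_space_PiM_centered_normal: "prob_space (\<Pi>\<^sub>M b\<in>(Basis::'a::euclidean_space set). centered_normal \<sigma>)"
  by (intro prob_space_PiM prob_space_normal_density) (simp add: s)

lemma distr_PiM_component_centered_normal: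
  assumes b: "(b::'a::euclidean_space) \<in> Basis"
  shows "distr (\<Pi>\<^sub>M b\<in>(Basis::'a set). centered_normal \<sigma>) lborel (\<lambda>f. f b) = centered_normal \<sigma>"
proof -
  have "distr (\<Pi>\<^sub>M b\<in>(Basis::'a set). centered_normal \<sigma>) lborel (\<lambda>f. f b)
      = distr (\<Pi>\<^sub>M b\<in>(Basis::'a set). centered_normal \<sigma>) (centered_normal \<sigma>) (\<lambda>f. f b)"
    by (rule distr_cong) auto
  also have "\<dots> = centered_normal \<sigma>"
    by (rule distr_PiM_component[OF prob_space_normal_density b]) (simp add: s)
  finally show ?thesis .
qed

lemma indep_vars_PiM_components:
  "prob_space.indep_vars (\<Pi>\<^sub>M b\<in>(Basis::'a::euclidean_space set). centered_normal \<sigma>) (\<lambda>_. borel) (\<lambda>b f. f b) Basis"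
proof -
  let ?P = "\<Pi>\<^sub>M b\<in>(Basis::'a set). centered_normal \<sigma>"
  interpret P: prob_space ?P by (rule prob_space_PiM_centered_normal)
  show ?thesis
  proof (subst P.indep_vars_iff_distr_eq_PiM')
    fix i :: 'a assume i: "i \<in> Basis"
    have "(\<lambda>f. f i) \<in> measurable ?P (centered_normal \<sigma>)"
      using i by (rule measurable_component_singleton)
    moreover have "measurable ?P (centered_normal \<sigma>) = measurable ?P borel"
      by (rule measurable_cong_sets) auto
    ultimately show "(\<lambda>f. f i) \<in> measurable ?P borel" by simp
  next
    have "distr ?P (\<Pi>\<^sub>M i\<in>Basis. borel) (\<lambda>x. \<lambda>i\<in>Basis. x i) = distr ?P (\<Pi>\<^sub>M i\<in>Basis. borel) (\<lambda>x. x)"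
      by (rule distr_cong) (auto simp: space_PiM PiE_def extensional_restrict)
    also have "\<dots> = ?P" by (rule distr_id2) (simp cong: sets_PiM_cong)
    also have "\<dots> = (\<Pi>\<^sub>M i\<in>Basis. distr ?P borel (\<lambda>f. f i))"
    proof (rule PiM_cong[OF refl])
      fix i :: 'a assume i: "i \<in> Basis"
      have "distr ?P borel (\<lambda>f. f i) = distr ?P lborel (\<lambda>f. f i)" by (rule distr_cong) auto
      then show "centered_normal \<sigma> = distr ?P borel (\<lambda>f. f i)"
        using distr_PiM_component_centered_normal[OF i] by simp
    qed
    finally show "distr ?P (\<Pi>\<^sub>M i\<in>Basis. borel) (\<lambda>x. \<lambda>i\<in>Basis. x i)
        = (\<Pi>\<^sub>M i\<in>Basis. distr ?P borel (\<lambda>f. f i))" .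
  qed simp
qed

lemma distributed_inner_sum_PiM:
  fixes \<theta> :: "'a::euclidean_space" assumes th: "\<theta> \<noteq> 0"
  shows "distributed (\<Pi>\<^sub>M b\<in>(Basis::'a set). centered_normal \<sigma>) lborel (\<lambda>f. \<theta> \<bullet> (\<Sum>b\<in>Basis. f b *\<^sub>R b))
     (\<lambda>y. ennreal (normal_density 0 (\<sigma> * norm \<theta>) y))"
proof -
  let ?P = "\<Pi>\<^sub>M b\<in>(Basis::'a set). centered_normal \<sigma>"
  interpret P: prob_space ?P by (rule prob_space_PiM_centered_normal)
  define I where "I = {b\<in>(Basis::'a set). \<theta> \<bullet> b \<noteq> 0}"
  have I: "finite I" "I \<noteq> {}" "I \<subseteq> Basis"
    using th euclidean_all_zero_iff[of \<theta>] by (auto simp: I_def)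
  have "P.indep_vars (\<lambda>_. borel) (\<lambda>b f. (\<theta> \<bullet> b) * f b) Basis"
    by (rule P.indep_vars_compose2[OF indep_vars_PiM_components]) auto
  then have indep: "P.indep_vars (\<lambda>_. borel) (\<lambda>b f. (\<theta> \<bullet> b) * f b) I"
    using I(3) by (rule P.indep_vars_subset)
  have "distributed ?P lborel (\<lambda>f. (\<theta> \<bullet> b) * f b) (normal_density 0 (\<bar>\<theta> \<bullet> b\<bar> * \<sigma>))" if "b \<in> I" for b
  proof -
    have "distributed ?P lborel (\<lambda>f. f b) (\<lambda>y. ennreal (normal_density 0 \<sigma> y))"
      using that distr_PiM_component_centered_normal by (auto simp: distributed_def I_def)
    from P.normal_density_affine[OF this s, of "\<theta> \<bullet> b" 0] that show ?thesis by (simp add: I_def)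
  qed
  then have "distributed ?P lborel (\<lambda>f. \<Sum>b\<in>I. (\<theta> \<bullet> b) * f b)
      (normal_density (\<Sum>b\<in>I. 0) (sqrt (\<Sum>b\<in>I. (\<bar>\<theta> \<bullet> b\<bar> * \<sigma>)\<^sup>2)))"
    using s by (intro P.sum_indep_normal[OF I(1,2) indep]) (auto simp: I_def)
  moreover have "(\<Sum>b\<in>I. (\<bar>\<theta> \<bullet> b\<bar> * \<sigma>)\<^sup>2) = (\<sigma> * norm \<theta>)\<^sup>2"
  proof -
    have "(\<Sum>b\<in>I. (\<bar>\<theta> \<bullet> b\<bar> * \<sigma>)\<^sup>2) = \<sigma>\<^sup>2 * (\<Sum>b\<in>Basis. (\<theta> \<bullet> b)\<^sup>2)"
      by (subst sum.mono_neutral_left[of Basis I])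
         (auto simp: I_def sum_distrib_left power_mult_distrib mult.commute)
    also have "(\<Sum>b\<in>Basis. (\<theta> \<bullet> b)\<^sup>2) = (norm \<theta>)\<^sup>2"
      by (simp add: euclidean_inner[symmetric] power2_eq_square flip: power2_norm_eq_inner)
    finally show ?thesis by (simp add: power_mult_distrib)
  qed
  moreover have "\<theta> \<bullet> (\<Sum>b\<in>Basis. f b *\<^sub>R b) = (\<Sum>b\<in>I. (\<theta> \<bullet> b) * f b)" for f :: "'a \<Rightarrow> real"
  proof -
    have "\<theta> \<bullet> (\<Sum>b\<in>Basis. f b *\<^sub>R b) = (\<Sum>b\<in>Basis. (\<theta> \<bullet> b) * f b)"
      by (simp add: inner_sum_right mult.commute)
    also have "\<dots> = (\<Sum>b\<in>I. (\<theta> \<bullet> b) * f b)"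
      by (rule sum.mono_neutral_right) (auto simp: I_def)
    finally show ?thesis .
  qed
  ultimately show ?thesis using s by simp
qed

lemma distr_inner_iso_gaussian:
  fixes \<theta> :: "'a::euclidean_space" assumes th: "\<theta> \<noteq> 0"
  shows "distr (iso_gaussian \<sigma> :: 'a measure) lborel (\<lambda>x. \<theta> \<bullet> x) = centered_normal (\<sigma> * norm \<theta>)"
proof -
  have "distr (iso_gaussian \<sigma> :: 'a measure) lborel (\<lambda>x. \<theta> \<bullet> x)
     = distr (\<Pi>\<^sub>M b\<in>(Basis::'a set). centered_normal \<sigma>) lborel ((\<lambda>x. \<theta> \<bullet> x) \<circ> (\<lambda>f. \<Sum>b\<in>Basis. f b *\<^sub>R b))"
    unfolding iso_gaussian_eq_distr_PiM[OF s] by (rule distr_distr) auto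
  then show ?thesis
    using distributed_inner_sum_PiM[OF th] unfolding distributed_def comp_def by simp
qed

lemma iso_gaussian_inner_std_normal:
  fixes \<theta> :: "'a::euclidean_space" and F :: "real \<Rightarrow> real"
  assumes th: "\<theta> \<noteq> 0" and F[measurable]: "F \<in> borel_measurable borel"
  shows "(\<integral>x. F (\<theta> \<bullet> x) \<partial>iso_gaussian \<sigma>) = (\<integral>z. std_normal_density z * F (\<sigma> * norm \<theta> * z) \<partial>lborel)"
    and "integrable (iso_gaussian \<sigma>) (\<lambda>x. F (\<theta> \<bullet> x))
      \<longleftrightarrow> integrable lborel (\<lambda>z. std_normal_density z * F (\<sigma> * norm \<theta> * z))"
proof -
  have sp: "0 < \<sigma> * norm \<theta>" using s th by simp
  have meas: "(\<lambda>x. \<theta> \<bullet> x) \<in> measurable (iso_gaussian \<sigma> :: 'a measure) lborel"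
    by (simp add: iso_gaussian_def)
  show "(\<integral>x. F (\<theta> \<bullet> x) \<partial>iso_gaussian \<sigma>) = (\<integral>z. std_normal_density z * F (\<sigma> * norm \<theta> * z) \<partial>lborel)"
    using integral_distr[OF meas, of F] centered_normal_std_normal(1)[OF sp F]
    by (simp add: distr_inner_iso_gaussian[OF th])
  show "integrable (iso_gaussian \<sigma>) (\<lambda>x. F (\<theta> \<bullet> x))
      \<longleftrightarrow> integrable lborel (\<lambda>z. std_normal_density z * F (\<sigma> * norm \<theta> * z))"
    using integrable_distr_eq[OF meas, of F] centered_normal_std_normal(2)[OF sp F]
    by (simp add: distr_inner_iso_gaussian[OF th])
qed

lemma integrable_iso_gaussian_id: "integrable (iso_gaussian \<sigma> :: 'a::euclidean_space measure) (\<lambda>x. x)"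
proof -
  have "integrable (iso_gaussian \<sigma> :: 'a measure) (\<lambda>x. (b \<bullet> x) *\<^sub>R b)" if b: "b \<in> Basis" for b :: 'a
  proof (intro integrable_scaleR_left)
    have "integrable lborel (\<lambda>z. std_normal_density z * (\<sigma> * norm b * z))"
      using integrable_mult_right[OF integrable_std_normal_moment[of 1], of "\<sigma> * norm b"]
      by (simp add: ac_simps)
    then show "integrable (iso_gaussian \<sigma>) (\<lambda>x. b \<bullet> x)"
      using iso_gaussian_inner_std_normal(2)[OF nonzero_Basis[OF b], of "\<lambda>t. t"] by simp
  qed
  then have "integrable (iso_gaussian \<sigma> :: 'a measure) (\<lambda>x. \<Sum>b\<in>Basis. (b \<bullet> x) *\<^sub>R b)"
    by (intro Bochner_Integration.integrable_sum) auto
  then show ?thesis by (simp add: euclidean_representation inner_commute)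
qed

end

section \<open>The EM operator\<close>

lemma two_EM_weight_minus_one:
  fixes \<sigma> :: real and \<theta> x :: "'a::euclidean_space" assumes s: "0 < \<sigma>"
  shows "2 * EM_weight \<sigma> \<theta> x - 1 = tanh (\<theta> \<bullet> x / \<sigma>\<^sup>2)"
proof -
  define u where "u = \<theta> \<bullet> x / \<sigma>\<^sup>2"
  define K where "K = - ((norm \<theta>)\<^sup>2 + (norm x)\<^sup>2) / (2 * \<sigma>\<^sup>2)"
  have "(norm (\<theta> - x))\<^sup>2 = (norm \<theta>)\<^sup>2 - 2 * (\<theta> \<bullet> x) + (norm x)\<^sup>2"
    by (simp add: power2_norm_eq_inner inner_diff_left inner_diff_right inner_commute)
  then have minus: "exp (- (norm (\<theta> - x))\<^sup>2 / (2 * \<sigma>\<^sup>2)) = exp K * exp u"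
    unfolding K_def u_def mult_exp_exp using s by (intro arg_cong[where f = exp]) (simp add: field_simps)
  have "(norm (\<theta> + x))\<^sup>2 = (norm \<theta>)\<^sup>2 + 2 * (\<theta> \<bullet> x) + (norm x)\<^sup>2"
    by (simp add: power2_norm_eq_inner inner_add_left inner_add_right inner_commute)
  then have plus: "exp (- (norm (\<theta> + x))\<^sup>2 / (2 * \<sigma>\<^sup>2)) = exp K * exp (- u)"
    unfolding K_def u_def mult_exp_exp using s by (intro arg_cong[where f = exp]) (simp add: field_simps)
  have "2 * EM_weight \<sigma> \<theta> x - 1 = 2 * (exp u / (exp u + exp (- u))) - 1"
    unfolding EM_weight_def minus plus by (simp flip: distrib_left)
  also have "\<dots> = tanh u"
    using add_pos_pos[OF exp_gt_zero exp_gt_zero, of u "- u"] by (simp add: tanh_altdef field_simps)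
  finally show ?thesis unfolding u_def .
qed

definition log_cosh_potential :: "real \<Rightarrow> real \<Rightarrow> real" where
  "log_cosh_potential \<sigma> t = \<sigma>\<^sup>2 * ln (cosh (t / \<sigma>\<^sup>2))"

lemma log_cosh_potential_measurable[measurable]: "log_cosh_potential \<sigma> \<in> borel_measurable borel"
  unfolding log_cosh_potential_def divide_inverse
  by (intro borel_measurable_continuous_onI) (auto intro!: continuous_intros)

lemma abs_log_cosh_potential_diff_le:
  fixes \<sigma> t t' :: real assumes s: "\<sigma> \<noteq> 0"
  shows "\<bar>log_cosh_potential \<sigma> t' - log_cosh_potential \<sigma> t\<bar> \<le> \<bar>t' - t\<bar>"
proof -
  have "\<sigma>\<^sup>2 * \<bar>ln (cosh (t' / \<sigma>\<^sup>2)) - ln (cosh (t / \<sigma>\<^sup>2))\<bar> \<le> \<sigma>\<^sup>2 * \<bar>t' / \<sigma>\<^sup>2 - t / \<sigma>\<^sup>2\<bar>"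
    by (intro mult_left_mono abs_ln_cosh_diff_le) auto
  also have "\<sigma>\<^sup>2 * \<bar>t' / \<sigma>\<^sup>2 - t / \<sigma>\<^sup>2\<bar> = \<bar>t' - t\<bar>"
    using s by (simp add: diff_divide_distrib[symmetric] abs_divide)
  also have "\<sigma>\<^sup>2 * \<bar>ln (cosh (t' / \<sigma>\<^sup>2)) - ln (cosh (t / \<sigma>\<^sup>2))\<bar>
      = \<bar>log_cosh_potential \<sigma> t' - log_cosh_potential \<sigma> t\<bar>"
    unfolding log_cosh_potential_def by (simp add: right_diff_distrib[symmetric] abs_mult)
  finally show ?thesis .
qed

lemma tanh_mult_le_log_cosh_potential_diff:
  fixes \<sigma> t t' :: real assumes s: "\<sigma> \<noteq> 0"
  shows "tanh (t / \<sigma>\<^sup>2) * (t' - t) \<le> log_cosh_potential \<sigma> t' - log_cosh_potential \<sigma> t"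
proof -
  have "\<sigma>\<^sup>2 * (tanh (t / \<sigma>\<^sup>2) * (t' / \<sigma>\<^sup>2 - t / \<sigma>\<^sup>2)) \<le> \<sigma>\<^sup>2 * (ln (cosh (t' / \<sigma>\<^sup>2)) - ln (cosh (t / \<sigma>\<^sup>2)))"
    using ln_cosh_tangent_le[of "t / \<sigma>\<^sup>2" "t' / \<sigma>\<^sup>2"] by (intro mult_left_mono) auto
  moreover have "\<sigma>\<^sup>2 * (tanh (t / \<sigma>\<^sup>2) * (t' / \<sigma>\<^sup>2 - t / \<sigma>\<^sup>2)) = tanh (t / \<sigma>\<^sup>2) * (t' - t)"
    using s by (simp add: field_simps)
  moreover have "\<sigma>\<^sup>2 * (ln (cosh (t' / \<sigma>\<^sup>2)) - ln (cosh (t / \<sigma>\<^sup>2)))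
      = log_cosh_potential \<sigma> t' - log_cosh_potential \<sigma> t"
    unfolding log_cosh_potential_def by (simp add: right_diff_distrib)
  ultimately show ?thesis by simp
qed

definition em_potential :: "real \<Rightarrow> 'a::euclidean_space \<Rightarrow> real" where
  "em_potential \<sigma> \<theta> = (\<integral>x. log_cosh_potential \<sigma> (\<theta> \<bullet> x) \<partial>iso_gaussian \<sigma>)"

context fixes \<sigma> :: real assumes s: "0 < \<sigma>"
begin

lemma integrable_log_cosh_potential_inner:
  "integrable (iso_gaussian \<sigma>) (\<lambda>x::'a::euclidean_space. log_cosh_potential \<sigma> (\<theta> \<bullet> x))"
proof (rule Bochner_Integration.integrable_bound)
  show "integrable (iso_gaussian \<sigma>) (\<lambda>x::'a. norm \<theta> * norm x)"
    using integrable_norm[OF integrable_iso_gaussian_id[OF s]] by (rule integrable_mult_right)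
  show "AE x in iso_gaussian \<sigma>. norm (log_cosh_potential \<sigma> (\<theta> \<bullet> x)) \<le> norm (norm \<theta> * norm x)"
    using abs_log_cosh_potential_diff_le[of \<sigma> "\<theta> \<bullet> x" 0 for x] Cauchy_Schwarz_ineq2[of \<theta>] s
    by (intro AE_I2) (auto simp: log_cosh_potential_def intro: order_trans)
qed measurable

lemma integrable_tanh_inner_scaleR:
  "integrable (iso_gaussian \<sigma>) (\<lambda>x::'a::euclidean_space. tanh (\<theta> \<bullet> x / \<sigma>\<^sup>2) *\<^sub>R x)"
proof (rule Bochner_Integration.integrable_bound[OF integrable_norm[OF integrable_iso_gaussian_id[OF s]]])
  have "(\<lambda>t. tanh (t / \<sigma>\<^sup>2)) \<in> borel_measurable (borel :: real measure)"
    unfolding divide_inverse by (intro borel_measurable_continuous_onI) (auto intro!: continuous_intros)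
  then show "(\<lambda>x::'a. tanh (\<theta> \<bullet> x / \<sigma>\<^sup>2) *\<^sub>R x) \<in> borel_measurable (iso_gaussian \<sigma>)"
    by measurable
  have "\<bar>tanh (\<theta> \<bullet> x / \<sigma>\<^sup>2)\<bar> \<le> 1" for x :: 'a
    using tanh_real_bounds[of "\<theta> \<bullet> x / \<sigma>\<^sup>2"] by (auto simp: abs_le_iff)
  then show "AE x in iso_gaussian \<sigma>. norm (tanh (\<theta> \<bullet> x / \<sigma>\<^sup>2) *\<^sub>R x) \<le> norm (norm x)"
    by (intro AE_I2) (simp add: mult_left_le_one_le)
qed

lemma EM_pop_eq_tanh:
  "EM_pop \<sigma> (\<theta>::'a::euclidean_space) = (\<integral>x. tanh (\<theta> \<bullet> x / \<sigma>\<^sup>2) *\<^sub>R x \<partial>iso_gaussian \<sigma>)"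
  unfolding EM_pop_def by (simp add: two_EM_weight_minus_one[OF s])

lemma inner_EM_pop:
  "EM_pop \<sigma> (\<theta>::'a::euclidean_space) \<bullet> w = (\<integral>x. tanh (\<theta> \<bullet> x / \<sigma>\<^sup>2) * (w \<bullet> x) \<partial>iso_gaussian \<sigma>)"
proof -
  have "EM_pop \<sigma> \<theta> \<bullet> w = (\<integral>x. (tanh (\<theta> \<bullet> x / \<sigma>\<^sup>2) *\<^sub>R x) \<bullet> w \<partial>iso_gaussian \<sigma>)"
    unfolding EM_pop_eq_tanh using integrable_tanh_inner_scaleR by (subst integral_inner_left) auto
  then show ?thesis by (simp add: inner_commute)
qed

text \<open>Convexity of \<open>log cosh\<close> makes \<open>EM_pop \<sigma> \<theta>\<close> a subgradient of \<open>em_potential \<sigma>\<close> at \<open>\<theta>\<close>.\<close>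
lemma inner_EM_pop_le_em_potential_diff:
  fixes \<theta> w :: "'a::euclidean_space"
  shows "EM_pop \<sigma> \<theta> \<bullet> w \<le> em_potential \<sigma> (\<theta> + w) - em_potential \<sigma> \<theta>"
proof -
  have "EM_pop \<sigma> \<theta> \<bullet> w \<le> (\<integral>x. log_cosh_potential \<sigma> ((\<theta> + w) \<bullet> x) - log_cosh_potential \<sigma> (\<theta> \<bullet> x) \<partial>iso_gaussian \<sigma>)"
    unfolding inner_EM_pop
  proof (rule integral_mono)
    show "integrable (iso_gaussian \<sigma>) (\<lambda>x. tanh (\<theta> \<bullet> x / \<sigma>\<^sup>2) * (w \<bullet> x))"
      using integrable_inner_left[OF integrable_tanh_inner_scaleR[of \<theta>], of w] by (simp add: inner_commute)
    show "tanh (\<theta> \<bullet> x / \<sigma>\<^sup>2) * (w \<bullet> x) \<le> log_cosh_potential \<sigma> ((\<theta> + w) \<bullet> x) - log_cosh_potential \<sigma> (\<theta> \<bullet> x)" for x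
      using tanh_mult_le_log_cosh_potential_diff[of \<sigma> "\<theta> \<bullet> x" "(\<theta> + w) \<bullet> x"] s by (simp add: inner_add_left)
  qed (intro Bochner_Integration.integrable_diff integrable_log_cosh_potential_inner)
  then show ?thesis
    unfolding em_potential_def
    by (simp add: Bochner_Integration.integral_diff[OF integrable_log_cosh_potential_inner integrable_log_cosh_potential_inner])
qed

text \<open>\<open>em_potential \<sigma> \<theta>\<close> only depends on \<open>norm \<theta>\<close>, and \<open>log_cosh_potential \<sigma>\<close> is \<open>1\<close>-Lipschitz.\<close>
lemma em_potential_diff_le:
  fixes \<theta>1 \<theta>2 :: "'a::euclidean_space" assumes t1: "\<theta>1 \<noteq> 0" and t2: "\<theta>2 \<noteq> 0"
  shows "em_potential \<sigma> \<theta>1 - em_potential \<sigma> \<theta>2 \<le> \<sigma> * \<bar>norm \<theta>1 - norm \<theta>2\<bar>"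
proof -
  let ?d = "\<sigma> * \<bar>norm \<theta>1 - norm \<theta>2\<bar>"
  let ?f = "\<lambda>\<theta> z. std_normal_density z * log_cosh_potential \<sigma> (\<sigma> * norm (\<theta>::'a) * z)"
  have i: "integrable lborel (?f \<theta>1)" "integrable lborel (?f \<theta>2)"
    using iso_gaussian_inner_std_normal(2)[OF s t1 log_cosh_potential_measurable[of \<sigma>]]
      iso_gaussian_inner_std_normal(2)[OF s t2 log_cosh_potential_measurable[of \<sigma>]]
      integrable_log_cosh_potential_inner[of \<theta>1] integrable_log_cosh_potential_inner[of \<theta>2]
    by blast+
  have hb: "has_bochner_integral lborel (\<lambda>z. ?d * (std_normal_density z * \<bar>z\<bar>)) (?d * sqrt (2 / pi))"
    using has_bochner_integral_mult_right[OF normal_density_moments(5)[OF zero_less_one]] by simp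
  have "em_potential \<sigma> \<theta>1 - em_potential \<sigma> \<theta>2 = (\<integral>z. ?f \<theta>1 z - ?f \<theta>2 z \<partial>lborel)"
    unfolding em_potential_def iso_gaussian_inner_std_normal(1)[OF s t1 log_cosh_potential_measurable[of \<sigma>]]
      iso_gaussian_inner_std_normal(1)[OF s t2 log_cosh_potential_measurable[of \<sigma>]]
    using i by simp
  also have "\<dots> \<le> (\<integral>z. ?d * (std_normal_density z * \<bar>z\<bar>) \<partial>lborel)"
  proof (rule integral_mono[OF Bochner_Integration.integrable_diff[OF i] integrable.intros[OF hb]])
    fix z :: real
    have "log_cosh_potential \<sigma> (\<sigma> * norm \<theta>1 * z) - log_cosh_potential \<sigma> (\<sigma> * norm \<theta>2 * z)
        \<le> \<bar>\<sigma> * norm \<theta>1 * z - \<sigma> * norm \<theta>2 * z\<bar>"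
      using abs_log_cosh_potential_diff_le[of \<sigma> "\<sigma> * norm \<theta>2 * z" "\<sigma> * norm \<theta>1 * z"] s by linarith
    also have "\<dots> = ?d * \<bar>z\<bar>"
      using s by (simp add: abs_mult left_diff_distrib[symmetric] right_diff_distrib[symmetric])
    finally have "std_normal_density z * (log_cosh_potential \<sigma> (\<sigma> * norm \<theta>1 * z)
        - log_cosh_potential \<sigma> (\<sigma> * norm \<theta>2 * z)) \<le> std_normal_density z * (?d * \<bar>z\<bar>)"
      by (intro mult_left_mono) auto
    then show "?f \<theta>1 z - ?f \<theta>2 z \<le> ?d * (std_normal_density z * \<bar>z\<bar>)"
      by (simp add: algebra_simps)
  qed
  also have "\<dots> = ?d * sqrt (2 / pi)" by (rule has_bochner_integral_integral_eq[OF hb])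
  also have "\<dots> \<le> ?d"
    using sqrt_two_div_pi_le s by (intro mult_left_le) (linarith, simp)
  finally show ?thesis .
qed

lemma EM_pop_orthogonal:
  fixes \<theta> v :: "'a::euclidean_space" assumes th: "\<theta> \<noteq> 0" and ov: "orthogonal \<theta> v"
  shows "EM_pop \<sigma> \<theta> \<bullet> v = 0"
proof (rule eq_0_if_le_quadratic)
  show "0 \<le> \<sigma> * (norm v)\<^sup>2 / norm \<theta>" using s by simp
  fix t :: real assume "t \<noteq> 0"
  have ov': "orthogonal \<theta> (t *\<^sub>R v)" using ov by (simp add: orthogonal_clauses)
  note bounds = norm_add_orthogonal_bounds[OF th ov']
  then have tv: "\<theta> + t *\<^sub>R v \<noteq> 0" using th by auto
  have "t * (EM_pop \<sigma> \<theta> \<bullet> v) = EM_pop \<sigma> \<theta> \<bullet> (t *\<^sub>R v)" by simp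
  also have "\<dots> \<le> em_potential \<sigma> (\<theta> + t *\<^sub>R v) - em_potential \<sigma> \<theta>"
    by (rule inner_EM_pop_le_em_potential_diff)
  also have "\<dots> \<le> \<sigma> * \<bar>norm (\<theta> + t *\<^sub>R v) - norm \<theta>\<bar>" by (rule em_potential_diff_le[OF tv th])
  also have "\<dots> \<le> \<sigma> * ((norm (t *\<^sub>R v))\<^sup>2 / norm \<theta>)"
    using bounds s by (intro mult_left_mono) auto
  also have "\<dots> = \<sigma> * (norm v)\<^sup>2 / norm \<theta> * t\<^sup>2" by (simp add: power_mult_distrib)
  finally show "t * (EM_pop \<sigma> \<theta> \<bullet> v) \<le> \<sigma> * (norm v)\<^sup>2 / norm \<theta> * t\<^sup>2" .
qed

lemma EM_pop_parallel:
  fixes \<theta> :: "'a::euclidean_space" assumes th: "\<theta> \<noteq> 0"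
  shows "EM_pop \<sigma> \<theta> = ((EM_pop \<sigma> \<theta> \<bullet> \<theta>) / (norm \<theta>)\<^sup>2) *\<^sub>R \<theta>"
proof -
  define v where "v = EM_pop \<sigma> \<theta> - ((EM_pop \<sigma> \<theta> \<bullet> \<theta>) / (norm \<theta>)\<^sup>2) *\<^sub>R \<theta>"
  have "(norm \<theta>)\<^sup>2 \<noteq> 0" using th by simp
  then have "orthogonal \<theta> v"
    by (simp add: v_def orthogonal_def inner_diff_right inner_commute power2_norm_eq_inner)
  then have "EM_pop \<sigma> \<theta> \<bullet> v = 0" "\<theta> \<bullet> v = 0" by (simp_all add: EM_pop_orthogonal[OF th] orthogonal_def)
  then have "v \<bullet> v = 0" by (simp add: v_def inner_diff_left inner_commute)
  then show ?thesis by (simp add: v_def)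
qed

lemma norm_EM_pop_div_norm:
  fixes \<theta> :: "'a::euclidean_space" assumes th: "\<theta> \<noteq> 0"
  shows "norm (EM_pop \<sigma> \<theta>) / norm \<theta> = em_ratio (norm \<theta> / \<sigma>)"
proof -
  let ?a = "norm \<theta> / \<sigma>"
  have n: "0 < norm \<theta>" using th by simp
  have "(\<lambda>t. tanh (t / \<sigma>\<^sup>2) * t) \<in> borel_measurable borel"
    unfolding divide_inverse by (intro borel_measurable_continuous_onI) (auto intro!: continuous_intros)
  then have "EM_pop \<sigma> \<theta> \<bullet> \<theta> = (\<integral>z. std_normal_density z * (tanh (\<sigma> * norm \<theta> * z / \<sigma>\<^sup>2) * (\<sigma> * norm \<theta> * z)) \<partial>lborel)"
    unfolding inner_EM_pop using iso_gaussian_inner_std_normal(1)[OF s th, of "\<lambda>t. tanh (t / \<sigma>\<^sup>2) * t"]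
    by (simp add: inner_commute)
  also have "\<dots> = (\<integral>z. (norm \<theta>)\<^sup>2 * (std_normal_density z * (z * tanh (?a * z) / ?a)) \<partial>lborel)"
  proof (rule Bochner_Integration.integral_cong[OF refl])
    fix z :: real
    have "\<sigma> * norm \<theta> * z / \<sigma>\<^sup>2 = ?a * z" using s by (simp add: power2_eq_square)
    then show "std_normal_density z * (tanh (\<sigma> * norm \<theta> * z / \<sigma>\<^sup>2) * (\<sigma> * norm \<theta> * z))
        = (norm \<theta>)\<^sup>2 * (std_normal_density z * (z * tanh (?a * z) / ?a))"
      using s n by (simp add: power2_eq_square)
  qed
  also have "\<dots> = (norm \<theta>)\<^sup>2 * em_ratio ?a" unfolding em_ratio_def by simp
  finally have "(EM_pop \<sigma> \<theta> \<bullet> \<theta>) / (norm \<theta>)\<^sup>2 = em_ratio ?a" using n by simp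
  moreover have "norm (EM_pop \<sigma> \<theta>) = \<bar>(EM_pop \<sigma> \<theta> \<bullet> \<theta>) / (norm \<theta>)\<^sup>2\<bar> * norm \<theta>"
    by (subst EM_pop_parallel[OF th]) simp
  ultimately show ?thesis using n s em_ratio_nonneg[of ?a] by simp
qed

end

lemma gamma_up_eq:
  fixes p n \<sigma> :: real assumes s: "0 < \<sigma>"
  shows "1 - p + p / (1 + n\<^sup>2 / (2 * \<sigma>\<^sup>2)) = 1 - p * (n / \<sigma>)\<^sup>2 / (2 + (n / \<sigma>)\<^sup>2)"
proof -
  define A where "A = (n / \<sigma>)\<^sup>2"
  have half: "1 + n\<^sup>2 / (2 * \<sigma>\<^sup>2) = (2 + A) / 2" using s by (simp add: A_def power_divide field_simps)
  have e: "p / (1 + n\<^sup>2 / (2 * \<sigma>\<^sup>2)) = 2 * p / (2 + A)" unfolding half by simp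
  have "0 < 2 + A" by (simp add: A_def add_pos_nonneg)
  then have "1 - p + 2 * p / (2 + A) = 1 - p * A / (2 + A)" by (simp add: field_simps)
  then show ?thesis unfolding e A_def .
qed

theorem theorem2:
  fixes \<sigma> :: real
  assumes "\<sigma> > 0"
  shows "(\<forall>\<theta>::'a::euclidean_space. \<theta> \<noteq> 0 \<longrightarrow>
            norm (EM_pop \<sigma> \<theta>) / norm \<theta>
              \<le> 1 - p_const + p_const / (1 + (norm \<theta>)\<^sup>2 / (2 * \<sigma>\<^sup>2))
          \<and> 1 - p_const + p_const / (1 + (norm \<theta>)\<^sup>2 / (2 * \<sigma>\<^sup>2)) < 1)
       \<and> (\<forall>\<theta>::'a. \<theta> \<noteq> 0 \<longrightarrow> (norm \<theta>)\<^sup>2 \<le> 5 * \<sigma>\<^sup>2 / 8 \<longrightarrow>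
            norm (EM_pop \<sigma> \<theta>) / norm \<theta> \<ge> 1 / (1 + 2 * (norm \<theta>)\<^sup>2 / \<sigma>\<^sup>2))"
proof (intro conjI allI impI)
  fix \<theta> :: 'a assume th: "\<theta> \<noteq> 0"
  let ?a = "norm \<theta> / \<sigma>"
  have a: "0 < ?a" and g: "0 < ?a\<^sup>2 / (2 + ?a\<^sup>2)"
    using th assms by (auto intro!: divide_pos_pos add_pos_nonneg)
  have "em_ratio ?a \<le> 1 - 4207/5000 * ?a\<^sup>2 / (2 + ?a\<^sup>2)" by (rule em_ratio_upper[OF a])
  also have "\<dots> \<le> 1 - p_const * ?a\<^sup>2 / (2 + ?a\<^sup>2)"
    using mult_right_mono[OF p_const_bounds(2) less_imp_le[OF g]] by simp
  finally show "norm (EM_pop \<sigma> \<theta>) / norm \<theta> \<le> 1 - p_const + p_const / (1 + (norm \<theta>)\<^sup>2 / (2 * \<sigma>\<^sup>2))"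
    by (simp add: norm_EM_pop_div_norm[OF assms th] gamma_up_eq[OF assms])
  have "0 < p_const * (?a\<^sup>2 / (2 + ?a\<^sup>2))" using p_const_bounds(1) g by (intro mult_pos_pos) auto
  then show "1 - p_const + p_const / (1 + (norm \<theta>)\<^sup>2 / (2 * \<sigma>\<^sup>2)) < 1"
    by (simp add: gamma_up_eq[OF assms])
next
  fix \<theta> :: 'a assume th: "\<theta> \<noteq> 0" and small: "(norm \<theta>)\<^sup>2 \<le> 5 * \<sigma>\<^sup>2 / 8"
  have "(norm \<theta> / \<sigma>)\<^sup>2 \<le> 5/8" using small assms by (simp add: power_divide field_simps)
  from em_ratio_lower[OF _ this] th assms
  show "1 / (1 + 2 * (norm \<theta>)\<^sup>2 / \<sigma>\<^sup>2) \<le> norm (EM_pop \<sigma> \<theta>) / norm \<theta>"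
    by (simp add: norm_EM_pop_div_norm power_divide)
qed

end
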